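(* There is no algorithm which, given a propositional Hilbert-type calculus $\mathbf{C}$ and a finite-valued logic $\mathbf{M}$ over the same language, decides whether $\mathbf{C}$ is weakly sound for $\mathbf{M}$, i.e., whether $\mathrm{Thm}(\mathbf{C})\subseteq\mathrm{Taut}(\mathbf{M})$.
   Context: A propositional language has variables $X_1,X_2,\ldots$ and finitely many connectives with arities (0-ary ones are constants). A substitution maps variables to formulas; $F\sigma$ is the result of simultaneously replacing each variable $X$ in $F$ by $\sigma(X)$. A propositional Hilbert-type calculus $\mathbf{C}$ is given by a finite set of axioms (formulas) and a finite set of rules, each consisting of premises $A_1,\ldots,A_n$ and a conclusion $C$ (formulas). A derivation is a finite sequence $F_1,\ldots,F_s$ in which each $F_i$ is either $A\sigma$ for an axiom $A$ and substitution $\sigma$, or $C\sigma$ for a rule with premises $A_1,\ldots,A_n$ and conclusion $C$ and a substitution $\sigma$ such that each $A_j\sigma$ occurs earlier in the sequence. $\mathrm{Thm}(\mathbf{C})$ is the set of formulas having a derivation. A finite-valued logic $\mathbf{M}$ is given by a finite set $V(\mathbf{M})$ of truth values, designated values $V^+(\mathbf{M})\subseteq V(\mathbf{M})$, and a truth function for each connective; valuations map variables to truth values and extend to formulas; a tautology is a formula designated under every valuation, and $\mathrm{Taut}(\mathbf{M})$ is the set of tautologies. *)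

theory Defs
  imports Main "HOL-Library.Nat_Bijection"
begin

text \<open>A language is given by the list of arities of its connectives;
  connective number c (c < length L) has arity L!c (arity 0 = constant).
  Variables X_0, X_1, ... are indexed by natural numbers.\<close>
type_synonym language = "nat list"

datatype form = Var nat | Con nat "form list"

fun wf_form :: "language \<Rightarrow> form \<Rightarrow> bool" where
  "wf_form L (Var x) = True"
| "wf_form L (Con c as) = (c < length L \<and> length as = L ! c \<and> (\<forall>a\<in>set as. wf_form L a))"

fun subst :: "(nat \<Rightarrow> form) \<Rightarrow> form \<Rightarrow> form" where
  "subst \<sigma> (Var x) = \<sigma> x"
| "subst \<sigma> (Con c as) = Con c (map (subst \<sigma>) as)"

definition is_subst :: "language \<Rightarrow> (nat \<Rightarrow> form) \<Rightarrow> bool" where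
  "is_subst L \<sigma> = (\<forall>x. wf_form L (\<sigma> x))"

type_synonym calculus = "form list \<times> (form list \<times> form) list"

definition calc_axioms :: "calculus \<Rightarrow> form list" where "calc_axioms C = fst C"
definition calc_rules :: "calculus \<Rightarrow> (form list \<times> form) list" where "calc_rules C = snd C"

definition calc_over :: "language \<Rightarrow> calculus \<Rightarrow> bool" where
  "calc_over L C = ((\<forall>A\<in>set (calc_axioms C). wf_form L A) \<and>
      (\<forall>(ps, c)\<in>set (calc_rules C). wf_form L c \<and> (\<forall>p\<in>set ps. wf_form L p)))"

definition is_derivation :: "language \<Rightarrow> calculus \<Rightarrow> form list \<Rightarrow> bool" where
  "is_derivation L C Fs = (\<forall>i<length Fs.
      (\<exists>A \<sigma>. A \<in> set (calc_axioms C) \<and> is_subst L \<sigma> \<and> Fs ! i = subst \<sigma> A) \<or>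
      (\<exists>ps c \<sigma>. (ps, c) \<in> set (calc_rules C) \<and> is_subst L \<sigma> \<and> Fs ! i = subst \<sigma> c \<and>
          (\<forall>p\<in>set ps. \<exists>j<i. Fs ! j = subst \<sigma> p)))"

definition Thm :: "language \<Rightarrow> calculus \<Rightarrow> form set" where
  "Thm L C = {F. \<exists>Fs. is_derivation L C Fs \<and> F \<in> set Fs}"

text \<open>A finite-valued logic: number n of truth values (the values are 0..<n),
  list of designated values, and for each connective c its truth function,
  given as a table: the value on arguments v_1..v_k is the entry at index
  tup_index n [v_1,...,v_k] (the base-n number with digits v_1...v_k).\<close>
type_synonym logic = "nat \<times> nat list \<times> nat list list"

definition lvals :: "logic \<Rightarrow> nat" where "lvals M = fst M"
definition ldesig :: "logic \<Rightarrow> nat list" where "ldesig M = fst (snd M)"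
definition ltables :: "logic \<Rightarrow> nat list list" where "ltables M = snd (snd M)"

definition tup_index :: "nat \<Rightarrow> nat list \<Rightarrow> nat" where
  "tup_index n vs = foldl (\<lambda>acc v. acc * n + v) 0 vs"

definition truth_fun :: "logic \<Rightarrow> nat \<Rightarrow> nat list \<Rightarrow> nat" where
  "truth_fun M c vs = ltables M ! c ! tup_index (lvals M) vs"

definition logic_over :: "language \<Rightarrow> logic \<Rightarrow> bool" where
  "logic_over L M = (0 < lvals M \<and> (\<forall>d\<in>set (ldesig M). d < lvals M) \<and>
      length (ltables M) = length L \<and>
      (\<forall>c<length L. length (ltables M ! c) = lvals M ^ (L ! c) \<and>
          (\<forall>v\<in>set (ltables M ! c). v < lvals M)))"

fun eval :: "logic \<Rightarrow> (nat \<Rightarrow> nat) \<Rightarrow> form \<Rightarrow> nat" where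
  "eval M v (Var x) = v x"
| "eval M v (Con c as) = truth_fun M c (map (eval M v) as)"

definition valuation :: "logic \<Rightarrow> (nat \<Rightarrow> nat) \<Rightarrow> bool" where
  "valuation M v = (\<forall>x. v x < lvals M)"

definition Taut :: "language \<Rightarrow> logic \<Rightarrow> form set" where
  "Taut L M = {F. wf_form L F \<and> (\<forall>v. valuation M v \<longrightarrow> eval M v F \<in> set (ldesig M))}"

definition weakly_sound :: "language \<Rightarrow> calculus \<Rightarrow> logic \<Rightarrow> bool" where
  "weakly_sound L C M = (Thm L C \<subseteq> Taut L M)"

datatype recf = Zero | Succ | Proj nat | Comp recf "recf list" | Prim recf recf | Mn recf

inductive reval :: "recf \<Rightarrow> nat list \<Rightarrow> nat \<Rightarrow> bool" where
  zero: "reval Zero xs 0"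
| succ: "reval Succ (x # xs) (Suc x)"
| proj: "i < length xs \<Longrightarrow> reval (Proj i) xs (xs ! i)"
| comp: "length ys = length gs \<Longrightarrow> (\<forall>i<length gs. reval (gs ! i) xs (ys ! i)) \<Longrightarrow>
           reval f ys z \<Longrightarrow> reval (Comp f gs) xs z"
| prim0: "reval f xs z \<Longrightarrow> reval (Prim f g) (0 # xs) z"
| primS: "reval (Prim f g) (n # xs) y \<Longrightarrow> reval g (n # y # xs) z \<Longrightarrow>
           reval (Prim f g) (Suc n # xs) z"
| mn: "reval f (n # xs) 0 \<Longrightarrow> (\<forall>m<n. \<exists>y. y \<noteq> 0 \<and> reval f (m # xs) y) \<Longrightarrow>
           reval (Mn f) xs n"

fun enc_form :: "form \<Rightarrow> nat" where
  "enc_form (Var x) = prod_encode (0, x)"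
| "enc_form (Con c as) = prod_encode (Suc c, list_encode (map enc_form as))"

definition enc_calc :: "calculus \<Rightarrow> nat" where
  "enc_calc C = prod_encode (list_encode (map enc_form (calc_axioms C)),
     list_encode (map (\<lambda>(ps, c). prod_encode (list_encode (map enc_form ps), enc_form c))
                      (calc_rules C)))"

definition enc_logic :: "logic \<Rightarrow> nat" where
  "enc_logic M = prod_encode (lvals M, prod_encode (list_encode (ldesig M),
     list_encode (map list_encode (ltables M))))"

definition enc_instance :: "language \<Rightarrow> calculus \<Rightarrow> logic \<Rightarrow> nat" where
  "enc_instance L C M = prod_encode (list_encode L, prod_encode (enc_calc C, enc_logic M))"

end

theory Submission
  imports Defs
begin

(*
  Suppose the partial recursive function f decided weak soundness.  From f we build a calculus
  diag_calc f over a fixed language whose atoms describe Kleene evaluation (eval_atom p xs y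
  for reval g xs y) and the arithmetic of the Cantor pairing; its rules are sound and complete
  for this meaning.  One further rule derives the falsum bot_atom once f is seen to return 1 on
  the code of the instance (sim_lang, diag_calc f, bot_logic).  The calculus cannot contain that
  code literally, since the code mentions the calculus; instead its only axiom self_atom k
  records the code k of its rule list, from which the rules recompute the code of the whole
  instance.  In bot_logic every connective except bot_atom is constantly designated, so the
  calculus is weakly sound iff bot_atom is not derivable, i.e. iff f does not return 1 on the
  instance: f answers wrongly on it.
*)

section \<open>Derivations\<close>

definition justified :: "language \<Rightarrow> calculus \<Rightarrow> form set \<Rightarrow> form \<Rightarrow> bool" where
  "justified L C S F \<longleftrightarrow>
     (\<exists>A \<sigma>. A \<in> set (calc_axioms C) \<and> is_subst L \<sigma> \<and> F = subst \<sigma> A) \<or>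
     (\<exists>ps c \<sigma>. (ps, c) \<in> set (calc_rules C) \<and> is_subst L \<sigma> \<and> F = subst \<sigma> c \<and>
        subst \<sigma> ` set ps \<subseteq> S)"

lemma justified_mono: "justified L C S F \<Longrightarrow> S \<subseteq> T \<Longrightarrow> justified L C T F"
  unfolding justified_def by blast

lemma in_set_take_iff: "i \<le> length xs \<Longrightarrow> x \<in> set (take i xs) \<longleftrightarrow> (\<exists>j<i. xs ! j = x)"
  by (auto simp: in_set_conv_nth)

lemma is_derivation_iff_justified:
  "is_derivation L C Fs \<longleftrightarrow> (\<forall>i<length Fs. justified L C (set (take i Fs)) (Fs ! i))"
  unfolding is_derivation_def justified_def by (auto simp: in_set_take_iff image_subset_iff)

lemma is_derivation_append:
  assumes "is_derivation L C Fs" "is_derivation L C Gs"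
  shows "is_derivation L C (Fs @ Gs)"
  unfolding is_derivation_iff_justified
proof (intro allI impI)
  fix i assume i: "i < length (Fs @ Gs)"
  show "justified L C (set (take i (Fs @ Gs))) ((Fs @ Gs) ! i)"
  proof (cases "i < length Fs")
    case True
    then show ?thesis using assms(1) by (simp add: is_derivation_iff_justified nth_append)
  next
    case False
    with i assms(2) have "justified L C (set (take (i - length Fs) Gs)) (Gs ! (i - length Fs))"
      by (simp add: is_derivation_iff_justified)
    then show ?thesis using False by (auto simp: nth_append elim: justified_mono)
  qed
qed

lemma is_derivation_Nil: "is_derivation L C []"
  by (simp add: is_derivation_def)

lemma is_derivation_concat:
  "\<forall>Fs\<in>set Fss. is_derivation L C Fs \<Longrightarrow> is_derivation L C (concat Fss)"
  by (induction Fss) (auto intro: is_derivation_Nil is_derivation_append)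

lemma is_derivation_snoc:
  "is_derivation L C Fs \<Longrightarrow> justified L C (set Fs) F \<Longrightarrow> is_derivation L C (Fs @ [F])"
  by (auto simp: is_derivation_iff_justified nth_append less_Suc_eq)

inductive derivable :: "language \<Rightarrow> calculus \<Rightarrow> form \<Rightarrow> bool" for L C where
  axiom: "A \<in> set (calc_axioms C) \<Longrightarrow> is_subst L \<sigma> \<Longrightarrow> derivable L C (subst \<sigma> A)"
| rule: "(ps, c) \<in> set (calc_rules C) \<Longrightarrow> is_subst L \<sigma> \<Longrightarrow>
    (\<forall>p\<in>set ps. derivable L C (subst \<sigma> p)) \<Longrightarrow> derivable L C (subst \<sigma> c)"

lemma derivable_if_justified:
  "justified L C S F \<Longrightarrow> S \<subseteq> Collect (derivable L C) \<Longrightarrow> derivable L C F"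
  unfolding justified_def by (auto simp: image_subset_iff intro: derivable.intros)

lemma derivable_if_in_derivation:
  assumes "is_derivation L C Fs"
  shows "i < length Fs \<Longrightarrow> derivable L C (Fs ! i)"
proof (induction i rule: less_induct)
  case (less i)
  have "justified L C (set (take i Fs)) (Fs ! i)"
    using assms less.prems by (simp add: is_derivation_iff_justified)
  moreover have "set (take i Fs) \<subseteq> Collect (derivable L C)"
    using less by (auto simp: in_set_take_iff)
  ultimately show ?case by (rule derivable_if_justified)
qed

lemma derivation_if_derivable:
  "derivable L C F \<Longrightarrow> \<exists>Fs. is_derivation L C Fs \<and> F \<in> set Fs"
proof (induction rule: derivable.induct)
  case (axiom A \<sigma>)
  then have "is_derivation L C [subst \<sigma> A]"
    by (auto simp: is_derivation_iff_justified justified_def)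
  then show ?case by auto
next
  case (rule ps c \<sigma>)
  then obtain D where D: "\<forall>p\<in>set ps. is_derivation L C (D p) \<and> subst \<sigma> p \<in> set (D p)"
    by metis
  then have "is_derivation L C (concat (map D ps))"
    by (intro is_derivation_concat) auto
  moreover have "justified L C (set (concat (map D ps))) (subst \<sigma> c)"
    using rule.hyps D unfolding justified_def by fastforce
  ultimately have "is_derivation L C (concat (map D ps) @ [subst \<sigma> c])"
    by (rule is_derivation_snoc)
  then show ?case by auto
qed

lemma Thm_iff_derivable: "F \<in> Thm L C \<longleftrightarrow> derivable L C F"
  unfolding Thm_def mem_Collect_eq
  by (metis in_set_conv_nth derivable_if_in_derivation derivation_if_derivable)

lemma wf_subst: "wf_form L A \<Longrightarrow> is_subst L \<sigma> \<Longrightarrow> wf_form L (subst \<sigma> A)"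
  by (induction A) (auto simp: is_subst_def)

lemma derivable_wf: "derivable L C F \<Longrightarrow> calc_over L C \<Longrightarrow> wf_form L F"
  by (induction rule: derivable.induct) (auto simp: calc_over_def intro!: wf_subst)

lemma reval_functional: "reval g xs y \<Longrightarrow> reval g xs y' \<Longrightarrow> y = y'"
proof (induction arbitrary: y' rule: reval.induct)
  case (comp ys gs xs f z)
  from comp.prems obtain ys' where ys': "length ys' = length gs"
    "\<forall>i<length gs. reval (gs ! i) xs (ys' ! i)" "reval f ys' y'"
    by (auto elim: reval.cases)
  have "ys = ys'"
    using comp.hyps(1) comp.IH(1) ys'(1,2) by (intro nth_equalityI) auto
  then show ?case using comp.IH(2) ys'(3) by blast
next
  case (prim0 f xs z g)
  from prim0.prems show ?case by cases (simp_all add: prim0.IH)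
next
  case (primS f g n xs y z)
  from primS.prems show ?case by cases (use primS.IH in auto)
next
  case (mn f n xs)
  from mn.prems obtain n' where n': "reval f (n' # xs) 0" "\<forall>m<n'. \<exists>y. y \<noteq> 0 \<and> reval f (m # xs) y"
    and "y' = n'"
    by (auto elim: reval.cases)
  have "\<not> n < n'" and "\<not> n' < n"
    using n' mn.IH by blast+
  then show ?case using \<open>y' = n'\<close> by simp
qed (auto elim: reval.cases)

lemma foldl_digits_less:
  "acc < n ^ j \<Longrightarrow> \<forall>v\<in>set vs. v < (n::nat) \<Longrightarrow>
    foldl (\<lambda>acc v. acc * n + v) acc vs < n ^ (j + length vs)"
proof (induction vs arbitrary: acc j)
  case (Cons v vs)
  have "acc * n + v < (acc + 1) * n"
    using Cons.prems(2) by (simp add: distrib_right)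
  also have "\<dots> \<le> n ^ j * n"
    using Cons.prems(1) by (intro mult_le_mono1) simp
  also have "\<dots> = n ^ Suc j"
    by (simp add: power_Suc2)
  finally show ?case
    using Cons.IH[of "acc * n + v" "Suc j"] Cons.prems(2) by simp
qed simp

lemma tup_index_less: "\<forall>v\<in>set vs. v < n \<Longrightarrow> tup_index n vs < n ^ length vs"
  unfolding tup_index_def using foldl_digits_less[of 0 n 0 vs] by simp

lemma eval_less_lvals:
  assumes "logic_over L M" "valuation M v"
  shows "wf_form L F \<Longrightarrow> eval M v F < lvals M"
proof (induction F)
  case (Var x)
  then show ?case using assms(2) by (simp add: valuation_def)
next
  case (Con c as)
  then have "tup_index (lvals M) (map (eval M v) as) < length (ltables M ! c)"
    using assms(1) tup_index_less[of "map (eval M v) as" "lvals M"]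
    by (auto simp: logic_over_def)
  then show ?case
    using assms(1) Con.prems by (auto simp: logic_over_def truth_fun_def)
qed

lemma eval_Con_constant_table:
  assumes "ltables M ! c = replicate (lvals M ^ length as) b" "\<forall>a\<in>set as. eval M v a < lvals M"
  shows "eval M v (Con c as) = b"
  using assms tup_index_less[of "map (eval M v) as" "lvals M"] by (simp add: truth_fun_def)

section \<open>Numerals, lists and programs as formulas\<close>

abbreviation zero_tm :: form where "zero_tm \<equiv> Con 0 []"
abbreviation suc_tm :: "form \<Rightarrow> form" where "suc_tm t \<equiv> Con 1 [t]"
abbreviation nil_tm :: form where "nil_tm \<equiv> Con 2 []"
abbreviation cons_tm :: "form \<Rightarrow> form \<Rightarrow> form" where "cons_tm t ts \<equiv> Con 3 [t, ts]"

abbreviation zero_prg :: form where "zero_prg \<equiv> Con 4 []"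
abbreviation succ_prg :: form where "succ_prg \<equiv> Con 5 []"
abbreviation proj_prg :: "form \<Rightarrow> form" where "proj_prg i \<equiv> Con 6 [i]"
abbreviation comp_prg :: "form \<Rightarrow> form \<Rightarrow> form" where "comp_prg f gs \<equiv> Con 7 [f, gs]"
abbreviation prim_prg :: "form \<Rightarrow> form \<Rightarrow> form" where "prim_prg f g \<equiv> Con 8 [f, g]"
abbreviation mn_prg :: "form \<Rightarrow> form" where "mn_prg f \<equiv> Con 9 [f]"

abbreviation eval_atom :: "form \<Rightarrow> form \<Rightarrow> form \<Rightarrow> form" where
  "eval_atom p xs y \<equiv> Con 10 [p, xs, y]"
abbreviation evals_atom :: "form \<Rightarrow> form \<Rightarrow> form \<Rightarrow> form" where
  "evals_atom ps xs ys \<equiv> Con 11 [ps, xs, ys]"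
abbreviation nonzero_below_atom :: "form \<Rightarrow> form \<Rightarrow> form \<Rightarrow> form" where
  "nonzero_below_atom p n xs \<equiv> Con 12 [p, n, xs]"
abbreviation nth_atom :: "form \<Rightarrow> form \<Rightarrow> form \<Rightarrow> form" where
  "nth_atom i xs y \<equiv> Con 13 [i, xs, y]"
abbreviation add_atom :: "form \<Rightarrow> form \<Rightarrow> form \<Rightarrow> form" where
  "add_atom x y z \<equiv> Con 14 [x, y, z]"
abbreviation triangle_atom :: "form \<Rightarrow> form \<Rightarrow> form" where
  "triangle_atom n t \<equiv> Con 15 [n, t]"
abbreviation pair_atom :: "form \<Rightarrow> form \<Rightarrow> form \<Rightarrow> form" where
  "pair_atom x y z \<equiv> Con 16 [x, y, z]"
abbreviation enc_nat_atom :: "form \<Rightarrow> form \<Rightarrow> form" where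
  "enc_nat_atom n e \<equiv> Con 17 [n, e]"
abbreviation code_atom :: "form \<Rightarrow> form \<Rightarrow> form" where
  "code_atom k e \<equiv> Con 18 [k, e]"
abbreviation self_atom :: "form \<Rightarrow> form" where
  "self_atom k \<equiv> Con 19 [k]"
abbreviation bot_atom :: form where
  "bot_atom \<equiv> Con 20 []"

definition sim_lang :: language where
  "sim_lang = [0, 1, 0, 2, 0, 0, 1, 2, 2, 1, 3, 3, 3, 3, 3, 2, 3, 2, 2, 1, 0]"

fun nat_tm :: "nat \<Rightarrow> form" where
  "nat_tm 0 = zero_tm"
| "nat_tm (Suc n) = suc_tm (nat_tm n)"

fun list_tm :: "form list \<Rightarrow> form" where
  "list_tm [] = nil_tm"
| "list_tm (t # ts) = cons_tm t (list_tm ts)"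

abbreviation nats_tm :: "nat list \<Rightarrow> form" where
  "nats_tm xs \<equiv> list_tm (map nat_tm xs)"

fun prog_tm :: "recf \<Rightarrow> form" where
  "prog_tm Zero = zero_prg"
| "prog_tm Succ = succ_prg"
| "prog_tm (Proj i) = proj_prg (nat_tm i)"
| "prog_tm (Comp f gs) = comp_prg (prog_tm f) (list_tm (map prog_tm gs))"
| "prog_tm (Prim f g) = prim_prg (prog_tm f) (prog_tm g)"
| "prog_tm (Mn f) = mn_prg (prog_tm f)"

lemma nat_tm_eq_Con:
  "nat_tm n = Con c as \<longleftrightarrow> (n = 0 \<and> c = 0 \<and> as = []) \<or> (\<exists>m. n = Suc m \<and> c = 1 \<and> as = [nat_tm m])"
  by (cases n) auto

lemma list_tm_eq_Con:
  "list_tm ts = Con c as \<longleftrightarrow>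
    (ts = [] \<and> c = 2 \<and> as = []) \<or> (\<exists>t ts'. ts = t # ts' \<and> c = 3 \<and> as = [t, list_tm ts'])"
  by (cases ts) auto

lemma prog_tm_eq_Con:
  "prog_tm g = Con c as \<longleftrightarrow>
    (g = Zero \<and> c = 4 \<and> as = []) \<or> (g = Succ \<and> c = 5 \<and> as = []) \<or>
    (\<exists>i. g = Proj i \<and> c = 6 \<and> as = [nat_tm i]) \<or>
    (\<exists>f gs. g = Comp f gs \<and> c = 7 \<and> as = [prog_tm f, list_tm (map prog_tm gs)]) \<or>
    (\<exists>f h. g = Prim f h \<and> c = 8 \<and> as = [prog_tm f, prog_tm h]) \<or>
    (\<exists>f. g = Mn f \<and> c = 9 \<and> as = [prog_tm f])"
  by (cases g) auto

lemmas tm_inversion =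
  map_eq_Cons_conv nat_tm_eq_Con list_tm_eq_Con prog_tm_eq_Con
  eq_commute[of "Con c as" "nat_tm n" for c as n]
  eq_commute[of "Con c as" "list_tm ts" for c as ts]
  eq_commute[of "Con c as" "prog_tm g" for c as g]

lemma nat_tm_inject [simp]: "nat_tm a = nat_tm b \<longleftrightarrow> a = b"
  by (induction a arbitrary: b) (auto simp: tm_inversion)

lemma list_tm_inject [simp]: "list_tm ts = list_tm us \<longleftrightarrow> ts = us"
  by (induction ts arbitrary: us) (auto simp: tm_inversion)

lemma prog_tm_inject [simp]: "prog_tm g = prog_tm h \<longleftrightarrow> g = h"
proof (induction g arbitrary: h)
  case (Comp f gs)
  then show ?case by (cases h) (auto intro: list.inj_map_strong)
qed (auto simp: tm_inversion)

lemma map_nat_tm_inject [simp]: "map nat_tm xs = map nat_tm ys \<longleftrightarrow> xs = ys"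
  by (simp add: inj_def)

lemma map_prog_tm_inject [simp]: "map prog_tm gs = map prog_tm hs \<longleftrightarrow> gs = hs"
  by (simp add: inj_def)

lemma subst_nat_tm [simp]: "subst \<sigma> (nat_tm n) = nat_tm n"
  by (induction n) auto

lemma subst_list_tm [simp]: "subst \<sigma> (list_tm ts) = list_tm (map (subst \<sigma>) ts)"
  by (induction ts) auto

lemma subst_prog_tm [simp]: "subst \<sigma> (prog_tm g) = prog_tm g"
  by (induction g) (auto simp: map_idI)

lemma length_sim_lang [simp]: "length sim_lang = 21"
  by (simp add: sim_lang_def)

lemmas nth_sim_lang [simp] = sim_lang_def[THEN arg_cong[where f = "\<lambda>l. l ! c" for c]]

lemma wf_nat_tm [simp]: "wf_form sim_lang (nat_tm n)"
  by (induction n) auto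

lemma wf_list_tm: "\<forall>t\<in>set ts. wf_form sim_lang t \<Longrightarrow> wf_form sim_lang (list_tm ts)"
  by (induction ts) auto

lemma wf_prog_tm [simp]: "wf_form sim_lang (prog_tm g)"
  by (induction g) (auto intro!: wf_list_tm)

lemma wf_nats_tm [simp]: "wf_form sim_lang (nats_tm xs)"
  by (rule wf_list_tm) auto

lemma wf_progs_tm [simp]: "wf_form sim_lang (list_tm (map prog_tm gs))"
  by (rule wf_list_tm) auto

section \<open>The diagonal calculus\<close>

definition bot_logic :: logic where
  "bot_logic = (2, [1], map (\<lambda>c. replicate (2 ^ (sim_lang ! c)) (if c = 20 then 0 else 1))
                            [0..<length sim_lang])"

(* The code of the instance (sim_lang, diag_calc f, bot_logic) for k = rules_code f. *)
definition instance_code :: "nat \<Rightarrow> nat" where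
  "instance_code k = prod_encode (list_encode sim_lang,
     prod_encode (prod_encode (list_encode [enc_form (self_atom (nat_tm k))], k), enc_logic bot_logic))"

(*
  The rules for eval_atom, evals_atom and nonzero_below_atom are the clauses of reval; the
  arithmetic atoms compute the Cantor pairing.  The enc_nat_atom and code_atom rules follow
  enc_form and enc_instance, where connective c is tagged Suc c: 1, 2 and 20 are the tags of
  zero_tm, suc_tm and self_atom.
*)
definition rules :: "recf \<Rightarrow> (form list \<times> form) list" where
  "rules f = [
    ([], eval_atom zero_prg (Var 0) zero_tm),
    ([], eval_atom succ_prg (cons_tm (Var 0) (Var 1)) (suc_tm (Var 0))),
    ([nth_atom (Var 0) (Var 1) (Var 2)], eval_atom (proj_prg (Var 0)) (Var 1) (Var 2)),
    ([evals_atom (Var 1) (Var 2) (Var 3), eval_atom (Var 0) (Var 3) (Var 4)],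
      eval_atom (comp_prg (Var 0) (Var 1)) (Var 2) (Var 4)),
    ([eval_atom (Var 0) (Var 2) (Var 3)],
      eval_atom (prim_prg (Var 0) (Var 1)) (cons_tm zero_tm (Var 2)) (Var 3)),
    ([eval_atom (prim_prg (Var 0) (Var 1)) (cons_tm (Var 2) (Var 3)) (Var 4),
      eval_atom (Var 1) (cons_tm (Var 2) (cons_tm (Var 4) (Var 3))) (Var 5)],
      eval_atom (prim_prg (Var 0) (Var 1)) (cons_tm (suc_tm (Var 2)) (Var 3)) (Var 5)),
    ([eval_atom (Var 0) (cons_tm (Var 1) (Var 2)) zero_tm, nonzero_below_atom (Var 0) (Var 1) (Var 2)],
      eval_atom (mn_prg (Var 0)) (Var 2) (Var 1)),
    ([], nonzero_below_atom (Var 0) zero_tm (Var 1)),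
    ([nonzero_below_atom (Var 0) (Var 1) (Var 2), eval_atom (Var 0) (cons_tm (Var 1) (Var 2)) (suc_tm (Var 3))],
      nonzero_below_atom (Var 0) (suc_tm (Var 1)) (Var 2)),
    ([], evals_atom nil_tm (Var 0) nil_tm),
    ([eval_atom (Var 0) (Var 2) (Var 3), evals_atom (Var 1) (Var 2) (Var 4)],
      evals_atom (cons_tm (Var 0) (Var 1)) (Var 2) (cons_tm (Var 3) (Var 4))),
    ([], nth_atom zero_tm (cons_tm (Var 0) (Var 1)) (Var 0)),
    ([nth_atom (Var 0) (Var 1) (Var 2)], nth_atom (suc_tm (Var 0)) (cons_tm (Var 3) (Var 1)) (Var 2)),
    ([], add_atom (Var 0) zero_tm (Var 0)),
    ([add_atom (Var 0) (Var 1) (Var 2)], add_atom (Var 0) (suc_tm (Var 1)) (suc_tm (Var 2))),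
    ([], triangle_atom zero_tm zero_tm),
    ([triangle_atom (Var 0) (Var 1), add_atom (Var 1) (suc_tm (Var 0)) (Var 2)],
      triangle_atom (suc_tm (Var 0)) (Var 2)),
    ([add_atom (Var 0) (Var 1) (Var 2), triangle_atom (Var 2) (Var 3), add_atom (Var 3) (Var 0) (Var 4)],
      pair_atom (Var 0) (Var 1) (Var 4)),
    ([pair_atom (nat_tm 1) zero_tm (Var 0)], enc_nat_atom zero_tm (Var 0)),
    ([enc_nat_atom (Var 0) (Var 1), pair_atom (Var 1) zero_tm (Var 2),
      pair_atom (nat_tm 2) (suc_tm (Var 2)) (Var 3)],
      enc_nat_atom (suc_tm (Var 0)) (Var 3)),
    ([enc_nat_atom (Var 0) (Var 1), pair_atom (Var 1) zero_tm (Var 2),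
      pair_atom (nat_tm 20) (suc_tm (Var 2)) (Var 3), pair_atom (Var 3) zero_tm (Var 4),
      pair_atom (suc_tm (Var 4)) (Var 0) (Var 5), pair_atom (Var 5) (nat_tm (enc_logic bot_logic)) (Var 6),
      pair_atom (nat_tm (list_encode sim_lang)) (Var 6) (Var 7)],
      code_atom (Var 0) (Var 7)),
    ([self_atom (Var 0), code_atom (Var 0) (Var 1),
      eval_atom (prog_tm f) (cons_tm (Var 1) nil_tm) (suc_tm zero_tm)],
      bot_atom)]"

definition rules_code :: "recf \<Rightarrow> nat" where
  "rules_code f = list_encode (map (\<lambda>(ps, c). prod_encode (list_encode (map enc_form ps), enc_form c))
                                   (rules f))"

definition diag_calc :: "recf \<Rightarrow> calculus" where
  "diag_calc f = ([self_atom (nat_tm (rules_code f))], rules f)"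

lemma enc_instance_diag_calc:
  "enc_instance sim_lang (diag_calc f) bot_logic = instance_code (rules_code f)"
  unfolding enc_instance_def enc_calc_def instance_code_def rules_code_def diag_calc_def
    calc_axioms_def calc_rules_def
  by simp

section \<open>Soundness of the rules\<close>

(* Arguments that do not decode to numerals, lists or programs put no constraint on an atom. *)
definition valid_eval :: "form \<Rightarrow> form \<Rightarrow> form \<Rightarrow> bool" where
  "valid_eval p t s \<longleftrightarrow>
     (\<forall>g xs. p = prog_tm g \<longrightarrow> t = nats_tm xs \<longrightarrow> (\<exists>y. s = nat_tm y \<and> reval g xs y))"

definition valid_evals :: "form \<Rightarrow> form \<Rightarrow> form \<Rightarrow> bool" where
  "valid_evals p t s \<longleftrightarrow>
     (\<forall>gs xs. p = list_tm (map prog_tm gs) \<longrightarrow> t = nats_tm xs \<longrightarrow>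
        (\<exists>ys. s = nats_tm ys \<and> length ys = length gs \<and> (\<forall>i<length gs. reval (gs ! i) xs (ys ! i))))"

definition valid_nonzero_below :: "form \<Rightarrow> form \<Rightarrow> form \<Rightarrow> bool" where
  "valid_nonzero_below p n t \<longleftrightarrow>
     (\<forall>g xs. p = prog_tm g \<longrightarrow> t = nats_tm xs \<longrightarrow>
        (\<exists>k. n = nat_tm k \<and> (\<forall>m<k. \<exists>y. y \<noteq> 0 \<and> reval g (m # xs) y)))"

definition valid_nth :: "form \<Rightarrow> form \<Rightarrow> form \<Rightarrow> bool" where
  "valid_nth n t s \<longleftrightarrow>
     (\<forall>i xs. n = nat_tm i \<longrightarrow> t = nats_tm xs \<longrightarrow> i < length xs \<and> s = nat_tm (xs ! i))"

definition valid_add :: "form \<Rightarrow> form \<Rightarrow> form \<Rightarrow> bool" where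
  "valid_add x y z \<longleftrightarrow> (\<forall>a b. x = nat_tm a \<longrightarrow> y = nat_tm b \<longrightarrow> z = nat_tm (a + b))"

definition valid_triangle :: "form \<Rightarrow> form \<Rightarrow> bool" where
  "valid_triangle n t \<longleftrightarrow> (\<forall>k. n = nat_tm k \<longrightarrow> t = nat_tm (triangle k))"

definition valid_pair :: "form \<Rightarrow> form \<Rightarrow> form \<Rightarrow> bool" where
  "valid_pair x y z \<longleftrightarrow> (\<forall>a b. x = nat_tm a \<longrightarrow> y = nat_tm b \<longrightarrow> z = nat_tm (prod_encode (a, b)))"

definition valid_enc_nat :: "form \<Rightarrow> form \<Rightarrow> bool" where
  "valid_enc_nat n e \<longleftrightarrow> (\<forall>k. n = nat_tm k \<longrightarrow> e = nat_tm (enc_form (nat_tm k)))"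

definition valid_code :: "form \<Rightarrow> form \<Rightarrow> bool" where
  "valid_code n e \<longleftrightarrow> (\<forall>k. n = nat_tm k \<longrightarrow> e = nat_tm (instance_code k))"

definition valid :: "recf \<Rightarrow> nat \<Rightarrow> form \<Rightarrow> bool" where
  "valid f k F \<longleftrightarrow>
     (\<forall>p t s. F = eval_atom p t s \<longrightarrow> valid_eval p t s) \<and>
     (\<forall>p t s. F = evals_atom p t s \<longrightarrow> valid_evals p t s) \<and>
     (\<forall>p n t. F = nonzero_below_atom p n t \<longrightarrow> valid_nonzero_below p n t) \<and>
     (\<forall>n t s. F = nth_atom n t s \<longrightarrow> valid_nth n t s) \<and>
     (\<forall>x y z. F = add_atom x y z \<longrightarrow> valid_add x y z) \<and>
     (\<forall>n t. F = triangle_atom n t \<longrightarrow> valid_triangle n t) \<and>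
     (\<forall>x y z. F = pair_atom x y z \<longrightarrow> valid_pair x y z) \<and>
     (\<forall>n e. F = enc_nat_atom n e \<longrightarrow> valid_enc_nat n e) \<and>
     (\<forall>n e. F = code_atom n e \<longrightarrow> valid_code n e) \<and>
     (\<forall>n. F = self_atom n \<longrightarrow> n = nat_tm k) \<and>
     (F = bot_atom \<longrightarrow> reval f [instance_code k] 1)"

lemma valid_simps [simp]:
  "valid f k (eval_atom p t s) = valid_eval p t s"
  "valid f k (evals_atom p t s) = valid_evals p t s"
  "valid f k (nonzero_below_atom p n t) = valid_nonzero_below p n t"
  "valid f k (nth_atom n t s) = valid_nth n t s"
  "valid f k (add_atom x y z) = valid_add x y z"
  "valid f k (triangle_atom n t) = valid_triangle n t"
  "valid f k (pair_atom x y z) = valid_pair x y z"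
  "valid f k (enc_nat_atom n e) = valid_enc_nat n e"
  "valid f k (code_atom n e) = valid_code n e"
  "valid f k (self_atom n) = (n = nat_tm k)"
  "valid f k bot_atom = reval f [instance_code k] 1"
  by (simp_all add: valid_def)

lemma valid_eval_Zero: "valid_eval zero_prg t zero_tm"
  unfolding valid_eval_def by (auto simp: tm_inversion intro: reval.zero)

lemma valid_eval_Succ: "valid_eval succ_prg (cons_tm x t) (suc_tm x)"
  unfolding valid_eval_def by (auto simp: tm_inversion intro: reval.succ)

lemma valid_eval_Proj: "valid_nth i t y \<Longrightarrow> valid_eval (proj_prg i) t y"
  unfolding valid_eval_def valid_nth_def by (auto simp: tm_inversion intro: reval.proj)

lemma valid_eval_Comp: "valid_evals gs t ys \<Longrightarrow> valid_eval p ys z \<Longrightarrow> valid_eval (comp_prg p gs) t z"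
  unfolding valid_eval_def valid_evals_def by (auto simp: tm_inversion) (auto intro: reval.comp)

lemma valid_eval_Prim_0: "valid_eval p t y \<Longrightarrow> valid_eval (prim_prg p q) (cons_tm zero_tm t) y"
  unfolding valid_eval_def by (auto simp: tm_inversion) (auto intro: reval.prim0)

lemma valid_eval_Prim_Suc:
  "valid_eval (prim_prg p q) (cons_tm n t) w \<Longrightarrow> valid_eval q (cons_tm n (cons_tm w t)) y \<Longrightarrow>
    valid_eval (prim_prg p q) (cons_tm (suc_tm n) t) y"
  unfolding valid_eval_def by (auto simp: tm_inversion) (auto intro: reval.primS)

lemma valid_eval_Mn:
  "valid_eval p (cons_tm n t) zero_tm \<Longrightarrow> valid_nonzero_below p n t \<Longrightarrow> valid_eval (mn_prg p) t n"
  unfolding valid_eval_def valid_nonzero_below_def by (auto simp: tm_inversion) (auto intro!: reval.mn)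

lemma valid_nonzero_below_0: "valid_nonzero_below p zero_tm t"
  unfolding valid_nonzero_below_def by (auto simp: tm_inversion)

lemma valid_nonzero_below_Suc:
  "valid_nonzero_below p n t \<Longrightarrow> valid_eval p (cons_tm n t) (suc_tm y) \<Longrightarrow>
    valid_nonzero_below p (suc_tm n) t"
  unfolding valid_eval_def valid_nonzero_below_def
  by (auto simp: tm_inversion less_Suc_eq) (use zero_less_Suc in blast)

lemma valid_evals_Nil: "valid_evals nil_tm t nil_tm"
  unfolding valid_evals_def by (auto simp: tm_inversion)

lemma valid_evals_Cons:
  "valid_eval p t y \<Longrightarrow> valid_evals ps t ys \<Longrightarrow> valid_evals (cons_tm p ps) t (cons_tm y ys)"
  unfolding valid_eval_def valid_evals_def by (auto simp: tm_inversion nth_Cons split: nat.splits)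

lemma valid_nth_0: "valid_nth zero_tm (cons_tm x t) x"
  unfolding valid_nth_def by (auto simp: tm_inversion)

lemma valid_nth_Suc: "valid_nth i t y \<Longrightarrow> valid_nth (suc_tm i) (cons_tm x t) y"
  unfolding valid_nth_def by (auto simp: tm_inversion)

lemma valid_add_0: "valid_add x zero_tm x"
  unfolding valid_add_def by (auto simp: tm_inversion)

lemma valid_add_Suc: "valid_add x y z \<Longrightarrow> valid_add x (suc_tm y) (suc_tm z)"
  unfolding valid_add_def by (auto simp: tm_inversion)

lemma valid_triangle_0: "valid_triangle zero_tm zero_tm"
  unfolding valid_triangle_def by (auto simp: tm_inversion)

lemma valid_triangle_Suc: "valid_triangle n t \<Longrightarrow> valid_add t (suc_tm n) u \<Longrightarrow> valid_triangle (suc_tm n) u"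
  unfolding valid_triangle_def valid_add_def by (auto simp: tm_inversion)

lemma valid_pair_intro:
  "valid_add a b d \<Longrightarrow> valid_triangle d t \<Longrightarrow> valid_add t a c \<Longrightarrow> valid_pair a b c"
  unfolding valid_triangle_def valid_add_def valid_pair_def by (auto simp: prod_encode_def)

lemma valid_enc_nat_0: "valid_pair (nat_tm 1) zero_tm e \<Longrightarrow> valid_enc_nat zero_tm e"
  unfolding valid_enc_nat_def valid_pair_def by (auto simp: tm_inversion)

lemma valid_enc_nat_Suc:
  "valid_enc_nat n e \<Longrightarrow> valid_pair e zero_tm p \<Longrightarrow> valid_pair (nat_tm 2) (suc_tm p) e' \<Longrightarrow>
    valid_enc_nat (suc_tm n) e'"
  unfolding valid_enc_nat_def valid_pair_def by (auto simp: tm_inversion)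

lemma valid_code_intro:
  "valid_enc_nat n e1 \<Longrightarrow> valid_pair e1 zero_tm p1 \<Longrightarrow> valid_pair (nat_tm 20) (suc_tm p1) e2 \<Longrightarrow>
    valid_pair e2 zero_tm p2 \<Longrightarrow> valid_pair (suc_tm p2) n p3 \<Longrightarrow>
    valid_pair p3 (nat_tm (enc_logic bot_logic)) p4 \<Longrightarrow> valid_pair (nat_tm (list_encode sim_lang)) p4 e \<Longrightarrow>
    valid_code n e"
  unfolding valid_enc_nat_def valid_pair_def valid_code_def instance_code_def
  by (auto simp: tm_inversion)

lemma reval_instance_code:
  "n = nat_tm k \<Longrightarrow> valid_code n e \<Longrightarrow> valid_eval (prog_tm f) (cons_tm e nil_tm) (suc_tm zero_tm) \<Longrightarrow>
    reval f [instance_code k] 1"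
  unfolding valid_code_def valid_eval_def by (auto simp: tm_inversion)

lemma rules_preserve_valid:
  assumes "(ps, c) \<in> set (rules f)" and "\<forall>p\<in>set ps. valid f k (subst \<sigma> p)"
  shows "valid f k (subst \<sigma> c)"
  using assms unfolding rules_def
  by (simp only: set_simps insert_iff empty_iff prod.inject)
    (elim disjE conjE FalseE; hypsubst;
      simp only: subst.simps list.map list.set ball_simps valid_simps subst_nat_tm subst_prog_tm simp_thms;
      (elim conjE)?;
      blast intro: valid_eval_Zero valid_eval_Succ valid_eval_Proj valid_eval_Comp valid_eval_Prim_0
        valid_eval_Prim_Suc valid_eval_Mn valid_nonzero_below_0 valid_nonzero_below_Suc valid_evals_Nil
        valid_evals_Cons valid_nth_0 valid_nth_Suc valid_add_0 valid_add_Suc valid_triangle_0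
        valid_triangle_Suc valid_pair_intro valid_enc_nat_0 valid_enc_nat_Suc valid_code_intro
        reval_instance_code)

lemma derivable_diag_calc_valid: "derivable L (diag_calc f) F \<Longrightarrow> valid f (rules_code f) F"
  by (induction rule: derivable.induct)
    (auto simp: diag_calc_def calc_axioms_def calc_rules_def intro: rules_preserve_valid)

section \<open>Completeness of the rules\<close>

abbreviation sim_derivable :: "recf \<Rightarrow> form \<Rightarrow> bool" where
  "sim_derivable f \<equiv> derivable sim_lang (diag_calc f)"

definition subst_of_list :: "form list \<Rightarrow> nat \<Rightarrow> form" where
  "subst_of_list ts i = (if i < length ts then ts ! i else zero_tm)"

lemma derivable_by_rule:
  assumes "(ps, c) \<in> set (rules f)" "\<forall>t\<in>set ts. wf_form sim_lang t"
    "\<forall>p\<in>set ps. sim_derivable f (subst (subst_of_list ts) p)"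
  shows "sim_derivable f (subst (subst_of_list ts) c)"
proof -
  have "is_subst sim_lang (subst_of_list ts)"
    using assms(2) by (auto simp: is_subst_def subst_of_list_def)
  then show ?thesis
    using assms(1,3) derivable.rule[of ps c "diag_calc f"] by (simp add: diag_calc_def calc_rules_def)
qed

lemma derivable_add: "sim_derivable f (add_atom (nat_tm a) (nat_tm b) (nat_tm (a + b)))"
proof (induction b)
  case 0
  show ?case
    using derivable_by_rule[of "[]" "add_atom (Var 0) zero_tm (Var 0)" f "[nat_tm a]"]
    by (simp add: rules_def subst_of_list_def)
next
  case (Suc b)
  then show ?case
    using derivable_by_rule[of "[add_atom (Var 0) (Var 1) (Var 2)]"
        "add_atom (Var 0) (suc_tm (Var 1)) (suc_tm (Var 2))" f "[nat_tm a, nat_tm b, nat_tm (a + b)]"]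
    by (simp add: rules_def subst_of_list_def)
qed

lemma derivable_triangle: "sim_derivable f (triangle_atom (nat_tm k) (nat_tm (triangle k)))"
proof (induction k)
  case 0
  show ?case
    using derivable_by_rule[of "[]" "triangle_atom zero_tm zero_tm" f "[]"]
    by (simp add: rules_def subst_of_list_def)
next
  case (Suc k)
  then show ?case
    using derivable_add[of f "triangle k" "Suc k"]
      derivable_by_rule[of "[triangle_atom (Var 0) (Var 1), add_atom (Var 1) (suc_tm (Var 0)) (Var 2)]"
        "triangle_atom (suc_tm (Var 0)) (Var 2)" f
        "[nat_tm k, nat_tm (triangle k), nat_tm (triangle k + Suc k)]"]
    by (simp add: rules_def subst_of_list_def)
qed

lemma derivable_pair: "sim_derivable f (pair_atom (nat_tm a) (nat_tm b) (nat_tm (prod_encode (a, b))))"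
  using derivable_add[of f a b] derivable_triangle[of f "a + b"] derivable_add[of f "triangle (a + b)" a]
    derivable_by_rule[of "[add_atom (Var 0) (Var 1) (Var 2), triangle_atom (Var 2) (Var 3),
        add_atom (Var 3) (Var 0) (Var 4)]" "pair_atom (Var 0) (Var 1) (Var 4)" f
      "[nat_tm a, nat_tm b, nat_tm (a + b), nat_tm (triangle (a + b)), nat_tm (triangle (a + b) + a)]"]
  by (simp add: rules_def subst_of_list_def prod_encode_def)

lemma derivable_enc_nat: "sim_derivable f (enc_nat_atom (nat_tm k) (nat_tm (enc_form (nat_tm k))))"
proof (induction k)
  case 0
  show ?case
    using derivable_pair[of f 1 0]
      derivable_by_rule[of "[pair_atom (nat_tm 1) zero_tm (Var 0)]" "enc_nat_atom zero_tm (Var 0)" f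
        "[nat_tm (prod_encode (1, 0))]"]
    by (simp add: rules_def subst_of_list_def)
next
  case (Suc k)
  define e where "e = enc_form (nat_tm k)"
  define p where "p = prod_encode (e, 0)"
  have code: "enc_form (nat_tm (Suc k)) = prod_encode (2, Suc p)"
    by (simp add: e_def p_def)
  show ?case
    unfolding code using Suc derivable_pair[of f e 0] derivable_pair[of f 2 "Suc p"]
      derivable_by_rule[of "[enc_nat_atom (Var 0) (Var 1), pair_atom (Var 1) zero_tm (Var 2),
          pair_atom (nat_tm 2) (suc_tm (Var 2)) (Var 3)]" "enc_nat_atom (suc_tm (Var 0)) (Var 3)" f
        "[nat_tm k, nat_tm e, nat_tm p, nat_tm (prod_encode (2, Suc p))]"]
    by (simp add: rules_def subst_of_list_def e_def p_def)
qed

lemma derivable_code: "sim_derivable f (code_atom (nat_tm k) (nat_tm (instance_code k)))"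
proof -
  define e1 where "e1 = enc_form (nat_tm k)"
  define p1 where "p1 = prod_encode (e1, 0)"
  define e2 where "e2 = prod_encode (20, Suc p1)"
  define p2 where "p2 = prod_encode (e2, 0)"
  define p3 where "p3 = prod_encode (Suc p2, k)"
  define p4 where "p4 = prod_encode (p3, enc_logic bot_logic)"
  have code: "instance_code k = prod_encode (list_encode sim_lang, p4)"
    by (simp add: instance_code_def e1_def p1_def e2_def p2_def p3_def p4_def)
  show ?thesis
    using derivable_enc_nat[of f k] derivable_pair[of f e1 0] derivable_pair[of f 20 "Suc p1"]
      derivable_pair[of f e2 0] derivable_pair[of f "Suc p2" k] derivable_pair[of f p3 "enc_logic bot_logic"]
      derivable_pair[of f "list_encode sim_lang" p4]
      derivable_by_rule[of "[enc_nat_atom (Var 0) (Var 1), pair_atom (Var 1) zero_tm (Var 2),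
          pair_atom (nat_tm 20) (suc_tm (Var 2)) (Var 3), pair_atom (Var 3) zero_tm (Var 4),
          pair_atom (suc_tm (Var 4)) (Var 0) (Var 5), pair_atom (Var 5) (nat_tm (enc_logic bot_logic)) (Var 6),
          pair_atom (nat_tm (list_encode sim_lang)) (Var 6) (Var 7)]" "code_atom (Var 0) (Var 7)" f
        "[nat_tm k, nat_tm e1, nat_tm p1, nat_tm e2, nat_tm p2, nat_tm p3, nat_tm p4,
          nat_tm (prod_encode (list_encode sim_lang, p4))]"]
    unfolding code
    by (simp add: rules_def subst_of_list_def flip: e1_def p1_def e2_def p2_def p3_def p4_def)
qed

lemma derivable_nth: "i < length xs \<Longrightarrow> sim_derivable f (nth_atom (nat_tm i) (nats_tm xs) (nat_tm (xs ! i)))"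
proof (induction xs arbitrary: i)
  case (Cons x xs)
  show ?case
  proof (cases i)
    case 0
    then show ?thesis
      using derivable_by_rule[of "[]" "nth_atom zero_tm (cons_tm (Var 0) (Var 1)) (Var 0)" f
          "[nat_tm x, nats_tm xs]"]
      by (simp add: rules_def subst_of_list_def)
  next
    case (Suc j)
    then show ?thesis
      using Cons derivable_by_rule[of "[nth_atom (Var 0) (Var 1) (Var 2)]"
          "nth_atom (suc_tm (Var 0)) (cons_tm (Var 3) (Var 1)) (Var 2)" f
          "[nat_tm j, nats_tm xs, nat_tm (xs ! j), nat_tm x]"]
      by (simp add: rules_def subst_of_list_def)
  qed
qed simp

lemma derivable_evals:
  "length ys = length gs \<Longrightarrow> \<forall>i<length gs. sim_derivable f (eval_atom (prog_tm (gs ! i)) (nats_tm xs) (nat_tm (ys ! i))) \<Longrightarrow>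
    sim_derivable f (evals_atom (list_tm (map prog_tm gs)) (nats_tm xs) (nats_tm ys))"
proof (induction gs arbitrary: ys)
  case Nil
  then show ?case
    using derivable_by_rule[of "[]" "evals_atom nil_tm (Var 0) nil_tm" f "[nats_tm xs]"]
    by (simp add: rules_def subst_of_list_def)
next
  case (Cons g gs)
  then obtain y ys' where ys: "ys = y # ys'"
    by (cases ys) auto
  have "sim_derivable f (eval_atom (prog_tm g) (nats_tm xs) (nat_tm y))"
    using Cons.prems ys by force
  moreover have "sim_derivable f (evals_atom (list_tm (map prog_tm gs)) (nats_tm xs) (nats_tm ys'))"
    using Cons.IH[of ys'] Cons.prems ys by force
  ultimately show ?case
    using ys derivable_by_rule[of "[eval_atom (Var 0) (Var 2) (Var 3), evals_atom (Var 1) (Var 2) (Var 4)]"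
        "evals_atom (cons_tm (Var 0) (Var 1)) (Var 2) (cons_tm (Var 3) (Var 4))" f
        "[prog_tm g, list_tm (map prog_tm gs), nats_tm xs, nat_tm y, nats_tm ys']"]
    by (simp add: rules_def subst_of_list_def)
qed

lemma derivable_nonzero_below:
  "\<forall>m<k. \<exists>y. y \<noteq> 0 \<and> sim_derivable f (eval_atom (prog_tm g) (nats_tm (m # xs)) (nat_tm y)) \<Longrightarrow>
    sim_derivable f (nonzero_below_atom (prog_tm g) (nat_tm k) (nats_tm xs))"
proof (induction k)
  case 0
  then show ?case
    using derivable_by_rule[of "[]" "nonzero_below_atom (Var 0) zero_tm (Var 1)" f "[prog_tm g, nats_tm xs]"]
    by (simp add: rules_def subst_of_list_def)
next
  case (Suc k)
  then have below: "sim_derivable f (nonzero_below_atom (prog_tm g) (nat_tm k) (nats_tm xs))"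
    by simp
  obtain y where "sim_derivable f (eval_atom (prog_tm g) (nats_tm (k # xs)) (nat_tm (Suc y)))"
    using Suc.prems by (metis lessI not0_implies_Suc)
  with below show ?case
    using derivable_by_rule[of "[nonzero_below_atom (Var 0) (Var 1) (Var 2),
          eval_atom (Var 0) (cons_tm (Var 1) (Var 2)) (suc_tm (Var 3))]"
        "nonzero_below_atom (Var 0) (suc_tm (Var 1)) (Var 2)" f "[prog_tm g, nat_tm k, nats_tm xs, nat_tm y]"]
    by (simp add: rules_def subst_of_list_def)
qed

lemma derivable_eval: "reval g xs y \<Longrightarrow> sim_derivable f (eval_atom (prog_tm g) (nats_tm xs) (nat_tm y))"
proof (induction rule: reval.induct)
  case (zero xs)
  then show ?case
    using derivable_by_rule[of "[]" "eval_atom zero_prg (Var 0) zero_tm" f "[nats_tm xs]"]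
    by (simp add: rules_def subst_of_list_def)
next
  case (succ x xs)
  then show ?case
    using derivable_by_rule[of "[]" "eval_atom succ_prg (cons_tm (Var 0) (Var 1)) (suc_tm (Var 0))" f
        "[nat_tm x, nats_tm xs]"]
    by (simp add: rules_def subst_of_list_def)
next
  case (proj i xs)
  then show ?case
    using derivable_nth[of i xs f]
      derivable_by_rule[of "[nth_atom (Var 0) (Var 1) (Var 2)]" "eval_atom (proj_prg (Var 0)) (Var 1) (Var 2)" f
        "[nat_tm i, nats_tm xs, nat_tm (xs ! i)]"]
    by (simp add: rules_def subst_of_list_def)
next
  case (comp ys gs xs h z)
  then have "sim_derivable f (evals_atom (list_tm (map prog_tm gs)) (nats_tm xs) (nats_tm ys))"
    by (intro derivable_evals) auto
  then show ?case
    using comp.IH(2)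
      derivable_by_rule[of "[evals_atom (Var 1) (Var 2) (Var 3), eval_atom (Var 0) (Var 3) (Var 4)]"
        "eval_atom (comp_prg (Var 0) (Var 1)) (Var 2) (Var 4)" f
        "[prog_tm h, list_tm (map prog_tm gs), nats_tm xs, nats_tm ys, nat_tm z]"]
    by (simp add: rules_def subst_of_list_def)
next
  case (prim0 h xs z g)
  then show ?case
    using derivable_by_rule[of "[eval_atom (Var 0) (Var 2) (Var 3)]"
        "eval_atom (prim_prg (Var 0) (Var 1)) (cons_tm zero_tm (Var 2)) (Var 3)" f
        "[prog_tm h, prog_tm g, nats_tm xs, nat_tm z]"]
    by (simp add: rules_def subst_of_list_def)
next
  case (primS h g n xs y z)
  then show ?case
    using derivable_by_rule[of "[eval_atom (prim_prg (Var 0) (Var 1)) (cons_tm (Var 2) (Var 3)) (Var 4),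
          eval_atom (Var 1) (cons_tm (Var 2) (cons_tm (Var 4) (Var 3))) (Var 5)]"
        "eval_atom (prim_prg (Var 0) (Var 1)) (cons_tm (suc_tm (Var 2)) (Var 3)) (Var 5)" f
        "[prog_tm h, prog_tm g, nat_tm n, nats_tm xs, nat_tm y, nat_tm z]"]
    by (simp add: rules_def subst_of_list_def)
next
  case (mn h n xs)
  then have "sim_derivable f (nonzero_below_atom (prog_tm h) (nat_tm n) (nats_tm xs))"
    by (intro derivable_nonzero_below) blast
  then show ?case
    using mn.IH(1)
      derivable_by_rule[of "[eval_atom (Var 0) (cons_tm (Var 1) (Var 2)) zero_tm,
          nonzero_below_atom (Var 0) (Var 1) (Var 2)]" "eval_atom (mn_prg (Var 0)) (Var 2) (Var 1)" f
        "[prog_tm h, nat_tm n, nats_tm xs]"]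
    by (simp add: rules_def subst_of_list_def)
qed

lemma derivable_bot_iff: "sim_derivable f bot_atom \<longleftrightarrow> reval f [instance_code (rules_code f)] 1"
proof
  assume "sim_derivable f bot_atom"
  then show "reval f [instance_code (rules_code f)] 1"
    using derivable_diag_calc_valid by fastforce
next
  let ?k = "rules_code f"
  assume "reval f [instance_code ?k] 1"
  then have "sim_derivable f (eval_atom (prog_tm f) (cons_tm (nat_tm (instance_code ?k)) nil_tm) (suc_tm zero_tm))"
    using derivable_eval[of f "[instance_code ?k]" 1 f] by simp
  moreover have "sim_derivable f (self_atom (nat_tm ?k))"
    using derivable.axiom[of "self_atom (nat_tm ?k)" "diag_calc f" sim_lang "subst_of_list []"]
    by (simp add: diag_calc_def calc_axioms_def is_subst_def subst_of_list_def)
  ultimately show "sim_derivable f bot_atom"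
    using derivable_code[of f ?k]
      derivable_by_rule[of "[self_atom (Var 0), code_atom (Var 0) (Var 1),
          eval_atom (prog_tm f) (cons_tm (Var 1) nil_tm) (suc_tm zero_tm)]" bot_atom f
        "[nat_tm ?k, nat_tm (instance_code ?k)]"]
    by (simp add: rules_def subst_of_list_def)
qed

section \<open>Weak soundness of the diagonal calculus\<close>

lemma lvals_bot_logic [simp]: "lvals bot_logic = 2"
  and ldesig_bot_logic [simp]: "ldesig bot_logic = [1]"
  and ltables_bot_logic: "c < length sim_lang \<Longrightarrow>
    ltables bot_logic ! c = replicate (2 ^ (sim_lang ! c)) (if c = 20 then 0 else 1)"
  by (simp_all add: bot_logic_def lvals_def ldesig_def ltables_def)

lemma logic_over_bot_logic: "logic_over sim_lang bot_logic"
  by (auto simp: logic_over_def ltables_bot_logic simp del: nth_sim_lang)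
    (simp_all add: bot_logic_def ltables_def)

lemma eval_bot_logic:
  assumes "wf_form sim_lang (Con c as)" "valuation bot_logic v"
  shows "eval bot_logic v (Con c as) = (if c = 20 then 0 else 1)"
proof (rule eval_Con_constant_table)
  show "ltables bot_logic ! c = replicate (lvals bot_logic ^ length as) (if c = 20 then 0 else 1)"
    using assms(1) ltables_bot_logic[of c] by (simp del: nth_sim_lang)
  show "\<forall>a\<in>set as. eval bot_logic v a < lvals bot_logic"
    using assms eval_less_lvals[OF logic_over_bot_logic] by simp
qed

lemma calc_over_diag_calc: "calc_over sim_lang (diag_calc f)"
  unfolding calc_over_def diag_calc_def calc_axioms_def calc_rules_def rules_def by simp

lemma derivable_diag_calc_Con: "sim_derivable f F \<Longrightarrow> \<exists>c as. F = Con c as"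
  by (induction rule: derivable.induct) (auto simp: diag_calc_def calc_axioms_def calc_rules_def rules_def)

lemma weakly_sound_diag_calc_iff:
  "weakly_sound sim_lang (diag_calc f) bot_logic \<longleftrightarrow> \<not> sim_derivable f bot_atom"
proof
  assume "weakly_sound sim_lang (diag_calc f) bot_logic"
  moreover have "eval bot_logic (\<lambda>_. 0) bot_atom = 0"
    using eval_bot_logic[of 20 "[]" "\<lambda>_. 0"] by (simp add: valuation_def)
  then have "bot_atom \<notin> Taut sim_lang bot_logic"
    unfolding Taut_def by (force simp: valuation_def)
  ultimately show "\<not> sim_derivable f bot_atom"
    by (auto simp: weakly_sound_def Thm_iff_derivable)
next
  assume no_bot: "\<not> sim_derivable f bot_atom"
  show "weakly_sound sim_lang (diag_calc f) bot_logic"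
    unfolding weakly_sound_def
  proof
    fix F assume "F \<in> Thm sim_lang (diag_calc f)"
    then have F: "sim_derivable f F"
      by (simp add: Thm_iff_derivable)
    then have wf: "wf_form sim_lang F"
      using calc_over_diag_calc derivable_wf by blast
    obtain c as where Con: "F = Con c as"
      using derivable_diag_calc_Con[OF F] by blast
    have "c \<noteq> 20"
      using F wf no_bot Con by auto
    then show "F \<in> Taut sim_lang bot_logic"
      using wf Con eval_bot_logic by (simp add: Taut_def)
  qed
qed

theorem proposition3:
  shows "\<not> (\<exists>f. \<forall>L C M. calc_over L C \<longrightarrow> logic_over L M \<longrightarrow>
            reval f [enc_instance L C M] (if weakly_sound L C M then 1 else 0))"
proof
  assume "\<exists>f. \<forall>L C M. calc_over L C \<longrightarrow> logic_over L M \<longrightarrow>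
            reval f [enc_instance L C M] (if weakly_sound L C M then 1 else 0)"
  then obtain f where decides: "\<forall>L C M. calc_over L C \<longrightarrow> logic_over L M \<longrightarrow>
            reval f [enc_instance L C M] (if weakly_sound L C M then 1 else 0)"
    by blast
  let ?sound = "weakly_sound sim_lang (diag_calc f) bot_logic"
  have verdict: "reval f [instance_code (rules_code f)] (if ?sound then 1 else 0)"
    using decides calc_over_diag_calc logic_over_bot_logic enc_instance_diag_calc by metis
  have "?sound \<longleftrightarrow> \<not> reval f [instance_code (rules_code f)] 1"
    using weakly_sound_diag_calc_iff derivable_bot_iff by blast
  then show False
    using verdict reval_functional[of f "[instance_code (rules_code f)]" 0 1] by (cases ?sound) auto
qed

end
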